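(* Let $\sigma>0$, $k>0$, $\alpha\geq 0$, $\lambda\in\mathbb{R}$, and consider the linear parabolic partial differential equation for $u=u(t,x)$, $x>0$, $$u_t=\tfrac12\sigma^2x^2u_{xx}+kx(\alpha-x)u_x+\lambda x^2u .$$ Suppose $\alpha=0$ and $\lambda=\frac{k^2}{2\sigma^2}$. Then the Lie algebra of infinitesimal (point) symmetries of this equation is spanned by the six vector fields $$V_1=\partial_t,$$ $$V_2=t\partial_t+\tfrac12 x\ln x\,\partial_x+\Big(\tfrac{k}{2\sigma^2}x\ln x+\tfrac14\ln x-\tfrac{\sigma^2}{8}t\Big)u\,\partial_u,$$ $$V_3=t^2\partial_t+tx\ln x\,\partial_x+\Big(\tfrac{k}{\sigma^2}tx\ln x-\tfrac{1}{2\sigma^2}\ln^2x+\tfrac12 t\ln x-\tfrac{\sigma^2}{8}t^2-\tfrac12 t\Big)u\,\partial_u,$$ $$V_4=x\partial_x+\tfrac{k}{\sigma^2}xu\,\partial_u,\qquad V_5=tx\partial_x+\Big(\tfrac{k}{\sigma^2}tx-\tfrac{1}{\sigma^2}\ln x+\tfrac12 t\Big)u\,\partial_u,\qquad V_6=u\partial_u,$$ together with the infinite-dimensional subalgebra of vector fields $V_\varphi=\varphi(t,x)\partial_u$, where $\varphi(t,x)$ is an arbitrary solution of the equation.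
   Context: An infinitesimal symmetry is a vector field $V=\tau(t,x,u)\partial_t+\xi(t,x,u)\partial_x+\phi(t,x,u)\partial_u$ generating a one-parameter group of transformations of $(t,x,u)$ that maps solutions of the equation to solutions; equivalently, the second prolongation of $V$ applied to $\tfrac12\sigma^2x^2u_{xx}+kx(\alpha-x)u_x+\lambda x^2u-u_t$ vanishes on solutions of the equation. *)

theory Defs
  imports "HOL-Analysis.Analysis"
begin

text \<open>Coefficient functions of vector fields on the (t,x,u)-space are
  curried functions real => real => real => real.  Partial derivatives:\<close>

definition pd_t :: "(real \<Rightarrow> real \<Rightarrow> real \<Rightarrow> real) \<Rightarrow> real \<Rightarrow> real \<Rightarrow> real \<Rightarrow> real" where
  "pd_t f = (\<lambda>t x u. deriv (\<lambda>s. f s x u) t)"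

definition pd_x :: "(real \<Rightarrow> real \<Rightarrow> real \<Rightarrow> real) \<Rightarrow> real \<Rightarrow> real \<Rightarrow> real \<Rightarrow> real" where
  "pd_x f = (\<lambda>t x u. deriv (\<lambda>s. f t s u) x)"

definition pd_u :: "(real \<Rightarrow> real \<Rightarrow> real \<Rightarrow> real) \<Rightarrow> real \<Rightarrow> real \<Rightarrow> real \<Rightarrow> real" where
  "pd_u f = (\<lambda>t x u. deriv (\<lambda>s. f t x s) u)"

inductive_set partials :: "(real \<Rightarrow> real \<Rightarrow> real \<Rightarrow> real) \<Rightarrow> (real \<Rightarrow> real \<Rightarrow> real \<Rightarrow> real) set"
  for f where
  self: "f \<in> partials f"
| dt: "g \<in> partials f \<Longrightarrow> pd_t g \<in> partials f"
| dx: "g \<in> partials f \<Longrightarrow> pd_x g \<in> partials f"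
| du: "g \<in> partials f \<Longrightarrow> pd_u g \<in> partials f"

definition smooth_on :: "(real \<times> real \<times> real) set \<Rightarrow> (real \<Rightarrow> real \<Rightarrow> real \<Rightarrow> real) \<Rightarrow> bool" where
  "smooth_on S f \<longleftrightarrow> (\<forall>g\<in>partials f. \<forall>p\<in>S. (\<lambda>(t, x, u). g t x u) differentiable (at p))"

definition dom_pos :: "(real \<times> real \<times> real) set" where
  "dom_pos = {(t, x, u). x > 0}"

definition E_eq :: "real \<Rightarrow> real \<Rightarrow> real \<Rightarrow> real \<Rightarrow> real \<Rightarrow> real \<Rightarrow> real \<Rightarrow> real \<Rightarrow> real \<Rightarrow> real" where
  "E_eq \<sigma> k \<alpha> lam x u ut ux uxx =
     1/2 * \<sigma>\<^sup>2 * x\<^sup>2 * uxx + k * x * (\<alpha> - x) * ux + lam * x\<^sup>2 * u - ut"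

definition is_solution :: "real \<Rightarrow> real \<Rightarrow> real \<Rightarrow> real \<Rightarrow> (real \<Rightarrow> real \<Rightarrow> real) \<Rightarrow> bool" where
  "is_solution \<sigma> k \<alpha> lam w \<longleftrightarrow>
     smooth_on dom_pos (\<lambda>t x u. w t x) \<and>
     (\<forall>t x. x > 0 \<longrightarrow>
        deriv (\<lambda>s. w s x) t =
          1/2 * \<sigma>\<^sup>2 * x\<^sup>2 * deriv (deriv (\<lambda>y. w t y)) x
          + k * x * (\<alpha> - x) * deriv (\<lambda>y. w t y) x + lam * x\<^sup>2 * w t x)"

text \<open>Second prolongation coefficients (standard formulas, cf. Olver) for
  V = tau d_t + xi d_x + phi d_u, evaluated at the jet point
  (t,x,u,u_t,u_x,u_xx,u_xt).\<close>
definition prol_t where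
  "prol_t \<tau> \<xi> \<phi> t x u ut ux =
     pd_t \<phi> t x u + (pd_u \<phi> t x u - pd_t \<tau> t x u) * ut - pd_t \<xi> t x u * ux
     - pd_u \<tau> t x u * ut\<^sup>2 - pd_u \<xi> t x u * ux * ut"

definition prol_x where
  "prol_x \<tau> \<xi> \<phi> t x u ut ux =
     pd_x \<phi> t x u + (pd_u \<phi> t x u - pd_x \<xi> t x u) * ux - pd_x \<tau> t x u * ut
     - pd_u \<xi> t x u * ux\<^sup>2 - pd_u \<tau> t x u * ux * ut"

definition prol_xx where
  "prol_xx \<tau> \<xi> \<phi> t x u ut ux uxx uxt =
     pd_x (pd_x \<phi>) t x u
     + (2 * pd_u (pd_x \<phi>) t x u - pd_x (pd_x \<xi>) t x u) * ux
     - pd_x (pd_x \<tau>) t x u * ut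
     + (pd_u (pd_u \<phi>) t x u - 2 * pd_u (pd_x \<xi>) t x u) * ux\<^sup>2
     - 2 * pd_u (pd_x \<tau>) t x u * ux * ut
     - pd_u (pd_u \<xi>) t x u * ux ^ 3
     - pd_u (pd_u \<tau>) t x u * ux\<^sup>2 * ut
     + (pd_u \<phi> t x u - 2 * pd_x \<xi> t x u) * uxx
     - 2 * pd_x \<tau> t x u * uxt
     - 3 * pd_u \<xi> t x u * ux * uxx
     - pd_u \<tau> t x u * ut * uxx
     - 2 * pd_u \<tau> t x u * ux * uxt"

text \<open>Infinitesimal symmetry: smooth coefficients on x > 0, and pr^(2) V applied to
  E vanishes at every jet point (with x > 0) lying on the equation E = 0.
  Partial derivatives of E: E_t = 0, E_x = sigma^2 x u_xx + k (alpha - 2x) u_x + 2 lambda x u,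
  E_u = lambda x^2, E_{u_x} = k x (alpha - x), E_{u_xx} = sigma^2 x^2 / 2, E_{u_t} = -1.\<close>
definition is_symmetry where
  "is_symmetry \<sigma> k \<alpha> lam \<tau> \<xi> \<phi> \<longleftrightarrow>
     smooth_on dom_pos \<tau> \<and> smooth_on dom_pos \<xi> \<and> smooth_on dom_pos \<phi> \<and>
     (\<forall>t x u ut ux uxx uxt. x > 0 \<longrightarrow> E_eq \<sigma> k \<alpha> lam x u ut ux uxx = 0 \<longrightarrow>
        \<xi> t x u * (\<sigma>\<^sup>2 * x * uxx + k * (\<alpha> - 2 * x) * ux + 2 * lam * x * u)
        + \<phi> t x u * (lam * x\<^sup>2)
        + prol_x \<tau> \<xi> \<phi> t x u ut ux * (k * x * (\<alpha> - x))
        + prol_xx \<tau> \<xi> \<phi> t x u ut ux uxx uxt * (1/2 * \<sigma>\<^sup>2 * x\<^sup>2)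
        - prol_t \<tau> \<xi> \<phi> t x u ut ux = 0)"

end

theory Submission
  imports Defs
begin

text \<open>
  Substituting \<open>u\<^sub>t\<close> from the equation turns the symmetry condition into a polynomial identity in
  the free jet variables \<open>u\<^sub>x, u\<^sub>x\<^sub>x, u\<^sub>x\<^sub>t\<close>; its coefficients are the determining equations.
  They force \<open>\<tau> = \<tau>(t)\<close>, \<open>\<xi>\<^sub>u = 0\<close> and \<open>\<phi>\<close> affine in \<open>u\<close>; the \<open>u\<^sub>x\<^sub>x\<close>-equation then gives
  \<open>\<xi> = \<tau>'(t)/2 x ln x + \<beta>(t) x\<close>, and the \<open>u\<^sub>x\<close>-equation gives the coefficient of \<open>u\<close> in \<open>\<phi>\<close> up to a
  function \<open>\<gamma>(t)\<close>. For \<open>\<lambda> = k\<^sup>2/(2\<sigma>\<^sup>2)\<close> the remaining zero-order equation is a quadratic polynomial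
  in \<open>ln x\<close>, whose coefficients give \<open>\<tau>''' = \<beta>'' = 0\<close> and an affine ODE for \<open>\<gamma>\<close>; integrating
  produces the six generators, and the \<open>u\<close>-free part of \<open>\<phi>\<close> solves the equation. Conversely, the
  listed fields satisfy the condition by direct computation, and they are smooth on \<open>x > 0\<close> because
  expressions built from \<open>t, x, u, ln x, 1/x\<close> and the derivatives of a smooth solution are closed
  under partial differentiation.
\<close>

lemma deriv_cong_pos:
  fixes f g :: "real \<Rightarrow> real"
  assumes "0 < x" and "\<And>y. 0 < y \<Longrightarrow> f y = g y"
  shows "deriv f x = deriv g x"
proof (rule deriv_cong_ev)
  show "\<forall>\<^sub>F y in nhds x. f y = g y"
    using eventually_nhds_in_open[of "{0<..}" x] assms by (auto elim!: eventually_mono)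
qed simp

lemma DERIV_zero_imp_const_pos:
  fixes f :: "real \<Rightarrow> real"
  assumes "\<And>y. 0 < y \<Longrightarrow> (f has_real_derivative 0) (at y)" and "0 < x" and "0 < y"
  shows "f x = f y"
proof -
  obtain c where "\<forall>z\<in>{0<..}. f z = c"
    using has_field_derivative_zero_constant[of "{0<..}" f] assms(1)
    by (auto intro: has_field_derivative_at_within)
  then show ?thesis using assms(2,3) by simp
qed

lemma DERIV_affine_imp_quadratic:
  fixes f f' :: "real \<Rightarrow> real"
  assumes "\<And>s. (f has_real_derivative f' s) (at s)" and "\<And>s. f' s = a + b * s"
  shows "f t = f 0 + a * t + b / 2 * t\<^sup>2"
proof -
  have "((\<lambda>s. f s - a * s - b / 2 * s\<^sup>2) has_real_derivative 0) (at s)" for s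
    using assms(1)[of s] by (auto intro!: derivative_eq_intros simp: assms(2))
  from DERIV_isconst_all[OF allI[OF this], of t 0] show ?thesis by simp
qed

lemma ln_quadratic_eq_zero:
  assumes "\<And>x. 0 < x \<Longrightarrow> a * (ln x)\<^sup>2 + b * ln x + c = (0::real)"
  shows "a = 0" and "b = 0" and "c = 0"
proof -
  have "c = 0" using assms[of 1] by simp
  moreover have "a + b = 0" and "a - b = 0"
    using assms[of "exp 1"] assms[of "exp (-1)"] \<open>c = 0\<close> by simp_all
  ultimately show "a = 0" "b = 0" "c = 0" by simp_all
qed

definition differentiable_pos :: "(real \<Rightarrow> real \<Rightarrow> real \<Rightarrow> real) \<Rightarrow> bool" where
  "differentiable_pos f \<longleftrightarrow> (\<forall>p\<in>dom_pos. (\<lambda>(t, x, u). f t x u) differentiable (at p))"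

lemma differentiable_posD:
  "differentiable_pos f \<Longrightarrow> 0 < x \<Longrightarrow> (\<lambda>(t, x, u). f t x u) differentiable (at (t, x, u))"
  by (simp add: differentiable_pos_def dom_pos_def)

lemma smooth_on_iff_partials_differentiable_pos:
  "smooth_on dom_pos f \<longleftrightarrow> (\<forall>g\<in>partials f. differentiable_pos g)"
  by (simp add: smooth_on_def differentiable_pos_def)

lemma smooth_on_partial_differentiable_pos:
  "smooth_on dom_pos f \<Longrightarrow> g \<in> partials f \<Longrightarrow> differentiable_pos g"
  by (simp add: smooth_on_iff_partials_differentiable_pos)

lemma has_real_derivative_pd_t:
  assumes "differentiable_pos g" and "0 < x"
  shows "((\<lambda>s. g s x u) has_real_derivative pd_t g t x u) (at t)"
proof -
  have "((\<lambda>s. (s, x, u)) has_derivative (\<lambda>h. (h, 0, 0))) (at t)"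
    by (auto intro!: derivative_eq_intros simp: zero_prod_def)
  then have "(\<lambda>s. (s, x, u)) differentiable (at t)" by (rule differentiableI)
  moreover have "(\<lambda>(t, x, u). g t x u) differentiable (at ((\<lambda>s. (s, x, u)) t))"
    using differentiable_posD[OF assms] by simp
  ultimately have "(\<lambda>s. g s x u) differentiable (at t)"
    using differentiable_chain_at unfolding o_def by fastforce
  then show ?thesis unfolding pd_t_def by (simp add: DERIV_deriv_iff_real_differentiable)
qed

lemma has_real_derivative_pd_x:
  assumes "differentiable_pos g" and "0 < x"
  shows "((\<lambda>s. g t s u) has_real_derivative pd_x g t x u) (at x)"
proof -
  have "((\<lambda>s. (t, s, u)) has_derivative (\<lambda>h. (0, h, 0))) (at x)"
    by (auto intro!: derivative_eq_intros simp: zero_prod_def)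
  then have "(\<lambda>s. (t, s, u)) differentiable (at x)" by (rule differentiableI)
  moreover have "(\<lambda>(t, x, u). g t x u) differentiable (at ((\<lambda>s. (t, s, u)) x))"
    using differentiable_posD[OF assms] by simp
  ultimately have "(\<lambda>s. g t s u) differentiable (at x)"
    using differentiable_chain_at unfolding o_def by fastforce
  then show ?thesis unfolding pd_x_def by (simp add: DERIV_deriv_iff_real_differentiable)
qed

lemma has_real_derivative_pd_u:
  assumes "differentiable_pos g" and "0 < x"
  shows "((\<lambda>s. g t x s) has_real_derivative pd_u g t x u) (at u)"
proof -
  have "((\<lambda>s. (t, x, s)) has_derivative (\<lambda>h. (0, 0, h))) (at u)"
    by (auto intro!: derivative_eq_intros simp: zero_prod_def)
  then have "(\<lambda>s. (t, x, s)) differentiable (at u)" by (rule differentiableI)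
  moreover have "(\<lambda>(t, x, u). g t x u) differentiable (at ((\<lambda>s. (t, x, s)) u))"
    using differentiable_posD[OF assms] by simp
  ultimately have "(\<lambda>s. g t x s) differentiable (at u)"
    using differentiable_chain_at unfolding o_def by fastforce
  then show ?thesis unfolding pd_u_def by (simp add: DERIV_deriv_iff_real_differentiable)
qed

lemma pd_t_eqI:
  assumes "\<And>s. f s x u = g s" and "(g has_real_derivative D) (at t)"
  shows "pd_t f t x u = D"
  using assms by (simp add: pd_t_def DERIV_imp_deriv)

lemma pd_u_eqI:
  assumes "\<And>s. f t x s = g s" and "(g has_real_derivative D) (at u)"
  shows "pd_u f t x u = D"
proof -
  have "f t x = g" using assms(1) by auto
  then show ?thesis using assms(2) by (simp add: pd_u_def DERIV_imp_deriv)
qed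

lemma pd_x_eqI:
  assumes "\<And>y. 0 < y \<Longrightarrow> f t y u = g y" and "(g has_real_derivative D) (at x)" and "0 < x"
  shows "pd_x f t x u = D"
proof -
  have "pd_x f t x u = deriv g x"
    unfolding pd_x_def by (rule deriv_cong_pos[OF assms(3) assms(1)])
  then show ?thesis using assms(2) by (simp add: DERIV_imp_deriv)
qed

definition eq_on_pos :: "(real \<Rightarrow> real \<Rightarrow> real \<Rightarrow> real) \<Rightarrow> (real \<Rightarrow> real \<Rightarrow> real \<Rightarrow> real) \<Rightarrow> bool" where
  "eq_on_pos f g \<longleftrightarrow> (\<forall>t x u. 0 < x \<longrightarrow> f t x u = g t x u)"

lemma eq_on_pos_refl [simp]: "eq_on_pos f f"
  by (simp add: eq_on_pos_def)

lemma eq_on_pos_trans: "eq_on_pos f g \<Longrightarrow> eq_on_pos g h \<Longrightarrow> eq_on_pos f h"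
  by (simp add: eq_on_pos_def)

lemma eq_on_pos_pd_t: "eq_on_pos f g \<Longrightarrow> eq_on_pos (pd_t f) (pd_t g)"
  by (simp add: eq_on_pos_def pd_t_def)

lemma eq_on_pos_pd_x: "eq_on_pos f g \<Longrightarrow> eq_on_pos (pd_x f) (pd_x g)"
  unfolding eq_on_pos_def pd_x_def by (auto intro!: deriv_cong_pos)

lemma eq_on_pos_pd_u: "eq_on_pos f g \<Longrightarrow> eq_on_pos (pd_u f) (pd_u g)"
  unfolding eq_on_pos_def pd_u_def by (metis ext)

lemma eq_on_pos_differentiable_pos:
  assumes "eq_on_pos f g" and "differentiable_pos g"
  shows "differentiable_pos f"
  unfolding differentiable_pos_def
proof
  fix p assume "p \<in> dom_pos"
  then obtain D where D: "((\<lambda>(t, x, u). g t x u) has_derivative D) (at p)"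
    using assms(2) by (auto simp: differentiable_pos_def differentiable_def)
  have "open dom_pos"
    unfolding dom_pos_def by (auto intro!: open_Collect_less continuous_intros simp: case_prod_unfold)
  have "((\<lambda>(t, x, u). f t x u) has_derivative D) (at p)"
    by (rule has_derivative_transform_within_open[OF D \<open>open dom_pos\<close> \<open>p \<in> dom_pos\<close>])
       (use assms(1) in \<open>auto simp: eq_on_pos_def dom_pos_def\<close>)
  then show "(\<lambda>(t, x, u). f t x u) differentiable (at p)" by (rule differentiableI)
qed

lemma partials_fix_u:
  assumes "g \<in> partials (\<lambda>t x u. f t x c)"
  shows "g = (\<lambda>t x u. 0) \<or> (\<exists>h\<in>partials f. g = (\<lambda>t x u. h t x c))"
  using assms
proof (induction rule: partials.induct)
  case (dt g)
  then show ?case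
  proof (elim disjE bexE)
    fix h assume "h \<in> partials f" "g = (\<lambda>t x u. h t x c)"
    then show ?thesis by (auto simp: pd_t_def intro!: bexI[of _ "pd_t h"] partials.dt)
  qed (simp add: pd_t_def)
next
  case (dx g)
  then show ?case
  proof (elim disjE bexE)
    fix h assume "h \<in> partials f" "g = (\<lambda>t x u. h t x c)"
    then show ?thesis by (auto simp: pd_x_def intro!: bexI[of _ "pd_x h"] partials.dx)
  qed (simp add: pd_x_def)
next
  case (du g)
  then show ?case
    by (elim disjE bexE) (simp_all add: pd_u_def)
qed (auto intro: partials.self)

lemma differentiable_pos_fix_u:
  assumes "differentiable_pos h"
  shows "differentiable_pos (\<lambda>t x u. h t x c)"
  unfolding differentiable_pos_def
proof
  fix p :: "real \<times> real \<times> real" assume "p \<in> dom_pos"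
  then have "(\<lambda>(t, x, u). h t x u) differentiable (at ((\<lambda>(t, x, u). (t, x, c)) p))"
    using assms by (auto simp: differentiable_pos_def dom_pos_def)
  moreover have "(\<lambda>(t, x, u::real). (t, x, c)) differentiable (at p)"
    by (auto simp: case_prod_unfold intro!: differentiableI derivative_eq_intros)
  ultimately have "((\<lambda>(t, x, u). h t x u) \<circ> (\<lambda>(t, x, u). (t, x, c))) differentiable (at p)"
    by (rule differentiable_chain_at[rotated])
  then show "(\<lambda>(t, x, u). h t x c) differentiable (at p)"
    by (simp add: o_def case_prod_unfold)
qed

lemma smooth_on_fix_u:
  assumes "smooth_on dom_pos f"
  shows "smooth_on dom_pos (\<lambda>t x u. f t x c)"
  unfolding smooth_on_iff_partials_differentiable_pos
proof
  fix g assume "g \<in> partials (\<lambda>t x u. f t x c)"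
  then have "g = (\<lambda>t x u. 0) \<or> (\<exists>h\<in>partials f. g = (\<lambda>t x u. h t x c))"
    by (rule partials_fix_u)
  then show "differentiable_pos g"
  proof (elim disjE bexE)
    assume "g = (\<lambda>t x u. 0)"
    then show "differentiable_pos g"
      by (simp add: differentiable_pos_def case_prod_unfold)
  next
    fix h assume "h \<in> partials f" "g = (\<lambda>t x u. h t x c)"
    then show "differentiable_pos g"
      using assms differentiable_pos_fix_u smooth_on_partial_differentiable_pos by blast
  qed
qed

section \<open>Smoothness of elementary expressions\<close>

definition coordinate_atoms :: "(real \<Rightarrow> real \<Rightarrow> real \<Rightarrow> real) set" where
  "coordinate_atoms = range (\<lambda>c t x u. c) \<union>
     {\<lambda>t x u. t, \<lambda>t x u. x, \<lambda>t x u. u, \<lambda>t x u. ln x, \<lambda>t x u. inverse x}"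

text \<open>The parameter \<open>h\<close> supplies the non-elementary ingredient, a smooth solution of the equation.\<close>

inductive_set elementary :: "(real \<Rightarrow> real \<Rightarrow> real \<Rightarrow> real) \<Rightarrow> (real \<Rightarrow> real \<Rightarrow> real \<Rightarrow> real) set"
  for h where
  atom: "a \<in> coordinate_atoms \<Longrightarrow> a \<in> elementary h"
| partial: "g \<in> partials h \<Longrightarrow> g \<in> elementary h"
| add: "f \<in> elementary h \<Longrightarrow> g \<in> elementary h \<Longrightarrow> (\<lambda>t x u. f t x u + g t x u) \<in> elementary h"
| mult: "f \<in> elementary h \<Longrightarrow> g \<in> elementary h \<Longrightarrow> (\<lambda>t x u. f t x u * g t x u) \<in> elementary h"

lemma elementary_const: "(\<lambda>t x u. c) \<in> elementary h"
  and elementary_var_t: "(\<lambda>t x u. t) \<in> elementary h"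
  and elementary_var_x: "(\<lambda>t x u. x) \<in> elementary h"
  and elementary_var_u: "(\<lambda>t x u. u) \<in> elementary h"
  and elementary_ln_x: "(\<lambda>t x u. ln x) \<in> elementary h"
  and elementary_inverse_x: "(\<lambda>t x u. inverse x) \<in> elementary h"
  by (auto intro: elementary.atom simp: coordinate_atoms_def)

lemma elementary_diff:
  assumes "f \<in> elementary h" and "g \<in> elementary h"
  shows "(\<lambda>t x u. f t x u - g t x u) \<in> elementary h"
proof -
  have "(\<lambda>t x u. f t x u + (-1) * g t x u) \<in> elementary h"
    by (intro elementary.add elementary.mult elementary_const assms)
  then show ?thesis by simp
qed

lemma elementary_power: "f \<in> elementary h \<Longrightarrow> (\<lambda>t x u. f t x u ^ n) \<in> elementary h"
  by (induction n) (auto intro: elementary.mult elementary_const)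

lemmas elementary_intros = elementary_const elementary_var_t elementary_var_x elementary_var_u
  elementary_ln_x elementary.add elementary.mult elementary_diff elementary_power

lemma differentiable_pos_fun_of_x:
  assumes "\<And>x. 0 < x \<Longrightarrow> (g has_real_derivative g' x) (at x)"
  shows "differentiable_pos (\<lambda>t x u. g x)"
  unfolding differentiable_pos_def
proof
  fix p :: "real \<times> real \<times> real" assume "p \<in> dom_pos"
  then have "0 < fst (snd p)" by (auto simp: dom_pos_def)
  then have "g differentiable (at (fst (snd p)))"
    using assms real_differentiable_def by blast
  moreover have "(\<lambda>q::real \<times> real \<times> real. fst (snd q)) differentiable (at p)"
    by (auto intro!: differentiableI derivative_eq_intros)
  ultimately show "(\<lambda>(t, x, u). g x) differentiable (at p)"
    using differentiable_chain_at[of "\<lambda>q. fst (snd q)" p g] by (simp add: o_def case_prod_unfold)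
qed

lemma differentiable_pos_coordinate_atom:
  assumes "a \<in> coordinate_atoms"
  shows "differentiable_pos a"
proof -
  have "differentiable_pos (\<lambda>t x u. c)" for c
    by (rule differentiable_pos_fun_of_x) (rule DERIV_const)
  moreover have "differentiable_pos (\<lambda>t x u. x)"
    by (rule differentiable_pos_fun_of_x) (rule DERIV_ident)
  moreover have "differentiable_pos (\<lambda>t x u. ln x)"
    by (rule differentiable_pos_fun_of_x) (rule DERIV_ln)
  moreover have "differentiable_pos (\<lambda>t x u. inverse x)"
    by (rule differentiable_pos_fun_of_x, rule DERIV_inverse) simp
  moreover have "differentiable_pos (\<lambda>t x u. t)" and "differentiable_pos (\<lambda>t x u. u)"
    by (auto simp: differentiable_pos_def case_prod_unfold intro!: differentiableI derivative_eq_intros)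
  ultimately show ?thesis
    using assms by (auto simp: coordinate_atoms_def)
qed

lemma differentiable_pos_elementary:
  assumes "smooth_on dom_pos h" and "f \<in> elementary h"
  shows "differentiable_pos f"
  using assms(2)
proof (induction rule: elementary.induct)
  case (atom a)
  then show ?case by (rule differentiable_pos_coordinate_atom)
next
  case (partial g)
  then show ?case by (rule smooth_on_partial_differentiable_pos[OF assms(1)])
next
  case (add f g)
  then show ?case by (auto simp: differentiable_pos_def case_prod_unfold intro: differentiable_add)
next
  case (mult f g)
  then show ?case by (auto simp: differentiable_pos_def case_prod_unfold intro: differentiable_mult)
qed

lemma bex_elementary_eq_on_pos_self: "f \<in> elementary h \<Longrightarrow> \<exists>g\<in>elementary h. eq_on_pos f g"
  using eq_on_pos_refl by blast

lemma elementary_closed_under_derivation: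
  assumes smooth: "smooth_on dom_pos h"
    and partials_closed: "\<And>g. g \<in> partials h \<Longrightarrow> D g \<in> partials h"
    and atoms: "\<And>a. a \<in> coordinate_atoms \<Longrightarrow> \<exists>g\<in>elementary h. eq_on_pos (D a) g"
    and sum_rule: "\<And>f g. differentiable_pos f \<Longrightarrow> differentiable_pos g \<Longrightarrow>
      eq_on_pos (D (\<lambda>t x u. f t x u + g t x u)) (\<lambda>t x u. D f t x u + D g t x u)"
    and product_rule: "\<And>f g. differentiable_pos f \<Longrightarrow> differentiable_pos g \<Longrightarrow>
      eq_on_pos (D (\<lambda>t x u. f t x u * g t x u)) (\<lambda>t x u. D f t x u * g t x u + f t x u * D g t x u)"
    and "f \<in> elementary h"
  shows "\<exists>g\<in>elementary h. eq_on_pos (D f) g"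
  using \<open>f \<in> elementary h\<close>
proof (induction rule: elementary.induct)
  case (atom a)
  then show ?case by (rule atoms)
next
  case (partial g)
  then show ?case by (auto intro!: bexI[of _ "D g"] elementary.partial partials_closed)
next
  case (add f g)
  then obtain f' g' where "f' \<in> elementary h" "eq_on_pos (D f) f'" "g' \<in> elementary h" "eq_on_pos (D g) g'"
    by blast
  moreover have "eq_on_pos (D (\<lambda>t x u. f t x u + g t x u)) (\<lambda>t x u. D f t x u + D g t x u)"
    by (intro sum_rule differentiable_pos_elementary[OF smooth] add.hyps)
  ultimately show ?case
    by (intro bexI[of _ "\<lambda>t x u. f' t x u + g' t x u"] elementary.add) (auto simp: eq_on_pos_def)
next
  case (mult f g)
  then obtain f' g' where "f' \<in> elementary h" "eq_on_pos (D f) f'" "g' \<in> elementary h" "eq_on_pos (D g) g'"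
    by blast
  moreover have "eq_on_pos (D (\<lambda>t x u. f t x u * g t x u)) (\<lambda>t x u. D f t x u * g t x u + f t x u * D g t x u)"
    by (intro product_rule differentiable_pos_elementary[OF smooth] mult.hyps)
  ultimately show ?case
    using mult.hyps
    by (intro bexI[of _ "\<lambda>t x u. f' t x u * g t x u + f t x u * g' t x u"] elementary.add elementary.mult)
       (auto simp: eq_on_pos_def)
qed

lemma pd_t_add: "differentiable_pos f \<Longrightarrow> differentiable_pos g \<Longrightarrow>
    eq_on_pos (pd_t (\<lambda>t x u. f t x u + g t x u)) (\<lambda>t x u. pd_t f t x u + pd_t g t x u)"
  and pd_t_mult: "differentiable_pos f \<Longrightarrow> differentiable_pos g \<Longrightarrow>
    eq_on_pos (pd_t (\<lambda>t x u. f t x u * g t x u)) (\<lambda>t x u. pd_t f t x u * g t x u + f t x u * pd_t g t x u)"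
  unfolding eq_on_pos_def pd_t_def
  by (auto intro!: DERIV_imp_deriv derivative_eq_intros has_real_derivative_pd_t[unfolded pd_t_def])

lemma pd_x_add: "differentiable_pos f \<Longrightarrow> differentiable_pos g \<Longrightarrow>
    eq_on_pos (pd_x (\<lambda>t x u. f t x u + g t x u)) (\<lambda>t x u. pd_x f t x u + pd_x g t x u)"
  and pd_x_mult: "differentiable_pos f \<Longrightarrow> differentiable_pos g \<Longrightarrow>
    eq_on_pos (pd_x (\<lambda>t x u. f t x u * g t x u)) (\<lambda>t x u. pd_x f t x u * g t x u + f t x u * pd_x g t x u)"
  unfolding eq_on_pos_def pd_x_def
  by (auto intro!: DERIV_imp_deriv derivative_eq_intros has_real_derivative_pd_x[unfolded pd_x_def])

lemma pd_u_add: "differentiable_pos f \<Longrightarrow> differentiable_pos g \<Longrightarrow>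
    eq_on_pos (pd_u (\<lambda>t x u. f t x u + g t x u)) (\<lambda>t x u. pd_u f t x u + pd_u g t x u)"
  and pd_u_mult: "differentiable_pos f \<Longrightarrow> differentiable_pos g \<Longrightarrow>
    eq_on_pos (pd_u (\<lambda>t x u. f t x u * g t x u)) (\<lambda>t x u. pd_u f t x u * g t x u + f t x u * pd_u g t x u)"
  unfolding eq_on_pos_def pd_u_def
  by (auto intro!: DERIV_imp_deriv derivative_eq_intros has_real_derivative_pd_u[unfolded pd_u_def])

lemma pd_t_coordinate_atom: "a \<in> coordinate_atoms \<Longrightarrow> \<exists>g\<in>elementary h. eq_on_pos (pd_t a) g"
  by (auto simp: coordinate_atoms_def pd_t_def intro!: bex_elementary_eq_on_pos_self elementary_const)

lemma pd_u_coordinate_atom: "a \<in> coordinate_atoms \<Longrightarrow> \<exists>g\<in>elementary h. eq_on_pos (pd_u a) g"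
  by (auto simp: coordinate_atoms_def pd_u_def intro!: bex_elementary_eq_on_pos_self elementary_const)

lemma pd_x_coordinate_atom:
  assumes "a \<in> coordinate_atoms"
  shows "\<exists>g\<in>elementary h. eq_on_pos (pd_x a) g"
proof -
  have "eq_on_pos (pd_x (\<lambda>t x u. ln x)) (\<lambda>t x u. inverse x)"
    by (auto simp: eq_on_pos_def pd_x_def intro!: DERIV_imp_deriv DERIV_ln)
  moreover have "eq_on_pos (pd_x (\<lambda>t x u. inverse x)) (\<lambda>t x u. (-1) * (inverse x * inverse x))"
    by (auto simp: eq_on_pos_def pd_x_def field_simps power2_eq_square intro!: DERIV_imp_deriv derivative_eq_intros)
  moreover have "(\<lambda>t x u. (-1) * (inverse x * inverse x)) \<in> elementary h"
    by (intro elementary.mult elementary_const elementary_inverse_x)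
  moreover have "\<exists>g\<in>elementary h. eq_on_pos (pd_x a) g"
    if "a \<in> range (\<lambda>c t x u. c) \<union> {\<lambda>t x u. t, \<lambda>t x u. x, \<lambda>t x u. u}" for a
    using that by (auto simp: pd_x_def intro!: bex_elementary_eq_on_pos_self elementary_const)
  ultimately show ?thesis
    using assms elementary_inverse_x unfolding coordinate_atoms_def by blast
qed

lemma elementary_pd_t: "smooth_on dom_pos h \<Longrightarrow> f \<in> elementary h \<Longrightarrow> \<exists>g\<in>elementary h. eq_on_pos (pd_t f) g"
  by (erule elementary_closed_under_derivation[where D = pd_t])
     (simp_all add: partials.dt pd_t_coordinate_atom pd_t_add pd_t_mult)

lemma elementary_pd_x: "smooth_on dom_pos h \<Longrightarrow> f \<in> elementary h \<Longrightarrow> \<exists>g\<in>elementary h. eq_on_pos (pd_x f) g"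
  by (erule elementary_closed_under_derivation[where D = pd_x])
     (simp_all add: partials.dx pd_x_coordinate_atom pd_x_add pd_x_mult)

lemma elementary_pd_u: "smooth_on dom_pos h \<Longrightarrow> f \<in> elementary h \<Longrightarrow> \<exists>g\<in>elementary h. eq_on_pos (pd_u f) g"
  by (erule elementary_closed_under_derivation[where D = pd_u])
     (simp_all add: partials.du pd_u_coordinate_atom pd_u_add pd_u_mult)

lemma smooth_on_if_eq_on_pos_elementary:
  assumes "smooth_on dom_pos h" and "g \<in> elementary h" and "eq_on_pos f g"
  shows "smooth_on dom_pos f"
proof -
  have partials_eq_on_pos: "\<exists>g'\<in>elementary h. eq_on_pos p g'" if "p \<in> partials f" for p
    using that
  proof (induction rule: partials.induct)
    case self
    then show ?case using assms(2,3) by blast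
  next
    case (dt p)
    then obtain g' where "g' \<in> elementary h" and "eq_on_pos p g'" by blast
    moreover obtain g'' where "g'' \<in> elementary h" and "eq_on_pos (pd_t g') g''"
      using elementary_pd_t[OF assms(1) \<open>g' \<in> elementary h\<close>] by blast
    ultimately show ?case using eq_on_pos_pd_t eq_on_pos_trans by blast
  next
    case (dx p)
    then obtain g' where "g' \<in> elementary h" and "eq_on_pos p g'" by blast
    moreover obtain g'' where "g'' \<in> elementary h" and "eq_on_pos (pd_x g') g''"
      using elementary_pd_x[OF assms(1) \<open>g' \<in> elementary h\<close>] by blast
    ultimately show ?case using eq_on_pos_pd_x eq_on_pos_trans by blast
  next
    case (du p)
    then obtain g' where "g' \<in> elementary h" and "eq_on_pos p g'" by blast
    moreover obtain g'' where "g'' \<in> elementary h" and "eq_on_pos (pd_u g') g''"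
      using elementary_pd_u[OF assms(1) \<open>g' \<in> elementary h\<close>] by blast
    ultimately show ?case using eq_on_pos_pd_u eq_on_pos_trans by blast
  qed
  then show ?thesis
    unfolding smooth_on_iff_partials_differentiable_pos
  proof (intro ballI)
    fix p assume "p \<in> partials f"
    then obtain g' where "g' \<in> elementary h" and "eq_on_pos p g'"
      using partials_eq_on_pos by blast
    then show "differentiable_pos p"
      using differentiable_pos_elementary[OF assms(1)] eq_on_pos_differentiable_pos by blast
  qed
qed

section \<open>The determining equations\<close>

text \<open>As a polynomial in the free
  jet variables \<open>ux, uxx, uxt\<close> its coefficients are the determining equations, which the
  \<open>residual_*_coeff\<close> lemmas extract by finite differences.\<close>

definition symmetry_residual ::
  "real \<Rightarrow> real \<Rightarrow> real \<Rightarrow> real \<Rightarrow> (real \<Rightarrow> real \<Rightarrow> real \<Rightarrow> real) \<Rightarrow> (real \<Rightarrow> real \<Rightarrow> real \<Rightarrow> real) \<Rightarrow>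
    (real \<Rightarrow> real \<Rightarrow> real \<Rightarrow> real) \<Rightarrow> real \<Rightarrow> real \<Rightarrow> real \<Rightarrow> real \<Rightarrow> real \<Rightarrow> real \<Rightarrow> real"
  where
  "symmetry_residual \<sigma> k \<alpha> lam \<tau> \<xi> \<phi> t x u ux uxx uxt =
    (let ut = 1/2 * \<sigma>\<^sup>2 * x\<^sup>2 * uxx + k * x * (\<alpha> - x) * ux + lam * x\<^sup>2 * u in
        \<xi> t x u * (\<sigma>\<^sup>2 * x * uxx + k * (\<alpha> - 2 * x) * ux + 2 * lam * x * u)
        + \<phi> t x u * (lam * x\<^sup>2)
        + prol_x \<tau> \<xi> \<phi> t x u ut ux * (k * x * (\<alpha> - x))
        + prol_xx \<tau> \<xi> \<phi> t x u ut ux uxx uxt * (1/2 * \<sigma>\<^sup>2 * x\<^sup>2)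
        - prol_t \<tau> \<xi> \<phi> t x u ut ux)"

lemma is_symmetry_iff_residual:
  "is_symmetry \<sigma> k \<alpha> lam \<tau> \<xi> \<phi> \<longleftrightarrow>
     smooth_on dom_pos \<tau> \<and> smooth_on dom_pos \<xi> \<and> smooth_on dom_pos \<phi> \<and>
     (\<forall>t x u ux uxx uxt. 0 < x \<longrightarrow> symmetry_residual \<sigma> k \<alpha> lam \<tau> \<xi> \<phi> t x u ux uxx uxt = 0)"
proof -
  have "E_eq \<sigma> k \<alpha> lam x u ut ux uxx = 0 \<longleftrightarrow>
      ut = 1/2 * \<sigma>\<^sup>2 * x\<^sup>2 * uxx + k * x * (\<alpha> - x) * ux + lam * x\<^sup>2 * u" for x u ut ux uxx
    by (auto simp: E_eq_def)
  then show ?thesis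
    unfolding is_symmetry_def symmetry_residual_def Let_def by auto
qed

lemma residual_uxt_coeff:
  "symmetry_residual \<sigma> k \<alpha> lam \<tau> \<xi> \<phi> t x u ux uxx 1 - symmetry_residual \<sigma> k \<alpha> lam \<tau> \<xi> \<phi> t x u ux uxx 0
   = - \<sigma>\<^sup>2 * x\<^sup>2 * (pd_x \<tau> t x u + pd_u \<tau> t x u * ux)"
  unfolding symmetry_residual_def prol_x_def prol_xx_def prol_t_def Let_def
  by (simp add: algebra_simps)

context
  fixes \<sigma> k \<alpha> lam t x u :: real and \<tau> \<xi> \<phi> :: "real \<Rightarrow> real \<Rightarrow> real \<Rightarrow> real"
  assumes tau_derivs_vanish: "pd_x \<tau> t x u = 0" "pd_u \<tau> t x u = 0" "pd_x (pd_x \<tau>) t x u = 0"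
    "pd_u (pd_x \<tau>) t x u = 0" "pd_u (pd_u \<tau>) t x u = 0"
begin

lemma residual_ux_uxx_coeff:
  "symmetry_residual \<sigma> k \<alpha> lam \<tau> \<xi> \<phi> t x u 1 1 0 - symmetry_residual \<sigma> k \<alpha> lam \<tau> \<xi> \<phi> t x u 1 0 0
     - symmetry_residual \<sigma> k \<alpha> lam \<tau> \<xi> \<phi> t x u 0 1 0 + symmetry_residual \<sigma> k \<alpha> lam \<tau> \<xi> \<phi> t x u 0 0 0
   = - \<sigma>\<^sup>2 * x\<^sup>2 * pd_u \<xi> t x u"
  unfolding symmetry_residual_def prol_x_def prol_xx_def prol_t_def Let_def tau_derivs_vanish
  by (simp add: algebra_simps power2_eq_square)

lemma residual_at_zero:
  "symmetry_residual \<sigma> k \<alpha> lam \<tau> \<xi> \<phi> t x u 0 0 0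
   = \<xi> t x u * 2 * lam * x * u + \<phi> t x u * lam * x\<^sup>2 + pd_x \<phi> t x u * k * x * (\<alpha> - x)
     + \<sigma>\<^sup>2 * x\<^sup>2 / 2 * pd_x (pd_x \<phi>) t x u - pd_t \<phi> t x u
     - (pd_u \<phi> t x u - pd_t \<tau> t x u) * lam * x\<^sup>2 * u"
  unfolding symmetry_residual_def prol_x_def prol_xx_def prol_t_def Let_def tau_derivs_vanish
  by (simp add: algebra_simps power2_eq_square)

context
  assumes xi_derivs_vanish: "pd_u \<xi> t x u = 0" "pd_u (pd_u \<xi>) t x u = 0" "pd_u (pd_x \<xi>) t x u = 0"
begin

lemma residual_ux_sq_coeff:
  "symmetry_residual \<sigma> k \<alpha> lam \<tau> \<xi> \<phi> t x u 1 0 0 + symmetry_residual \<sigma> k \<alpha> lam \<tau> \<xi> \<phi> t x u (-1) 0 0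
     - 2 * symmetry_residual \<sigma> k \<alpha> lam \<tau> \<xi> \<phi> t x u 0 0 0
   = \<sigma>\<^sup>2 * x\<^sup>2 * pd_u (pd_u \<phi>) t x u"
  unfolding symmetry_residual_def prol_x_def prol_xx_def prol_t_def Let_def tau_derivs_vanish xi_derivs_vanish
  by (simp add: algebra_simps power2_eq_square)

lemma residual_uxx_coeff:
  "symmetry_residual \<sigma> k \<alpha> lam \<tau> \<xi> \<phi> t x u 0 1 0 - symmetry_residual \<sigma> k \<alpha> lam \<tau> \<xi> \<phi> t x u 0 0 0
   = \<sigma>\<^sup>2 * x * \<xi> t x u - \<sigma>\<^sup>2 * x\<^sup>2 * pd_x \<xi> t x u + pd_t \<tau> t x u * \<sigma>\<^sup>2 * x\<^sup>2 / 2"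
  unfolding symmetry_residual_def prol_x_def prol_xx_def prol_t_def Let_def tau_derivs_vanish xi_derivs_vanish
  by (simp add: field_simps power2_eq_square)

lemma residual_ux_coeff:
  "symmetry_residual \<sigma> k \<alpha> lam \<tau> \<xi> \<phi> t x u 1 0 0 - symmetry_residual \<sigma> k \<alpha> lam \<tau> \<xi> \<phi> t x u (-1) 0 0
   = 2 * (\<xi> t x u * k * (\<alpha> - 2 * x) + (pd_t \<tau> t x u - pd_x \<xi> t x u) * k * x * (\<alpha> - x)
       + \<sigma>\<^sup>2 * x\<^sup>2 / 2 * (2 * pd_u (pd_x \<phi>) t x u - pd_x (pd_x \<xi>) t x u) + pd_t \<xi> t x u)"
  unfolding symmetry_residual_def prol_x_def prol_xx_def prol_t_def Let_def tau_derivs_vanish xi_derivs_vanish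
  by (simp add: algebra_simps power2_eq_square)

end

end

section \<open>Solving the determining equations\<close>

text \<open>The coefficients of \<open>c\<^sub>1 V\<^sub>1 + \<dots> + c\<^sub>6 V\<^sub>6 + V\<^sub>w\<close>.\<close>

definition span_tau :: "real \<Rightarrow> real \<Rightarrow> real \<Rightarrow> real \<Rightarrow> real \<Rightarrow> real \<Rightarrow> real" where
  "span_tau c1 c2 c3 t x u = c1 + c2 * t + c3 * t\<^sup>2"

definition span_xi :: "real \<Rightarrow> real \<Rightarrow> real \<Rightarrow> real \<Rightarrow> real \<Rightarrow> real \<Rightarrow> real \<Rightarrow> real" where
  "span_xi c2 c3 c4 c5 t x u = c2 * (1/2 * x * ln x) + c3 * (t * x * ln x) + c4 * x + c5 * (t * x)"

definition span_phi ::
  "real \<Rightarrow> real \<Rightarrow> real \<Rightarrow> real \<Rightarrow> real \<Rightarrow> real \<Rightarrow> real \<Rightarrow> (real \<Rightarrow> real \<Rightarrow> real) \<Rightarrow>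
    real \<Rightarrow> real \<Rightarrow> real \<Rightarrow> real"
  where
  "span_phi \<sigma> k c2 c3 c4 c5 c6 w t x u =
            c2 * ((k / (2 * \<sigma>\<^sup>2) * x * ln x + 1/4 * ln x - \<sigma>\<^sup>2 / 8 * t) * u)
          + c3 * ((k / \<sigma>\<^sup>2 * t * x * ln x - 1 / (2 * \<sigma>\<^sup>2) * (ln x)\<^sup>2 + 1/2 * t * ln x
                   - \<sigma>\<^sup>2 / 8 * t\<^sup>2 - 1/2 * t) * u)
          + c4 * (k / \<sigma>\<^sup>2 * x * u)
          + c5 * ((k / \<sigma>\<^sup>2 * t * x - 1 / \<sigma>\<^sup>2 * ln x + 1/2 * t) * u)
          + c6 * u
          + w t x"

definition is_combination_of_generators ::
  "real \<Rightarrow> real \<Rightarrow> real \<Rightarrow> real \<Rightarrow> real \<Rightarrow> real \<Rightarrow> real \<Rightarrow> real \<Rightarrow> (real \<Rightarrow> real \<Rightarrow> real) \<Rightarrow>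
    (real \<Rightarrow> real \<Rightarrow> real \<Rightarrow> real) \<Rightarrow> (real \<Rightarrow> real \<Rightarrow> real \<Rightarrow> real) \<Rightarrow> (real \<Rightarrow> real \<Rightarrow> real \<Rightarrow> real) \<Rightarrow> bool"
  where
  "is_combination_of_generators \<sigma> k c1 c2 c3 c4 c5 c6 w \<tau> \<xi> \<phi> \<longleftrightarrow>
    (\<forall>t x u. x > 0 \<longrightarrow>
        \<tau> t x u = span_tau c1 c2 c3 t x u \<and>
        \<xi> t x u = span_xi c2 c3 c4 c5 t x u \<and>
        \<phi> t x u = span_phi \<sigma> k c2 c3 c4 c5 c6 w t x u)"

locale pde_symmetry =
  fixes \<sigma> k lam :: real and \<tau> \<xi> \<phi> :: "real \<Rightarrow> real \<Rightarrow> real \<Rightarrow> real"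
  assumes sigma_pos: "0 < \<sigma>" and lam_eq: "lam = k\<^sup>2 / (2 * \<sigma>\<^sup>2)"
    and smooth_tau: "smooth_on dom_pos \<tau>"
    and smooth_xi: "smooth_on dom_pos \<xi>"
    and smooth_phi: "smooth_on dom_pos \<phi>"
    and residual_zero: "\<And>t x u ux uxx uxt. 0 < x \<Longrightarrow> symmetry_residual \<sigma> k 0 lam \<tau> \<xi> \<phi> t x u ux uxx uxt = 0"
begin

lemma differentiable_pos_partials:
  "g \<in> partials \<tau> \<Longrightarrow> differentiable_pos g"
  "g \<in> partials \<xi> \<Longrightarrow> differentiable_pos g"
  "g \<in> partials \<phi> \<Longrightarrow> differentiable_pos g"
  using smooth_tau smooth_xi smooth_phi by (simp_all add: smooth_on_partial_differentiable_pos)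

lemma tau_x: assumes "0 < x" shows "pd_x \<tau> t x u = 0"
proof -
  have "\<sigma>\<^sup>2 * x\<^sup>2 * pd_x \<tau> t x u = 0"
    using residual_uxt_coeff[of \<sigma> k 0 lam \<tau> \<xi> \<phi> t x u 0 0] residual_zero[OF assms] by simp
  then show ?thesis using sigma_pos assms by simp
qed

lemma tau_u: assumes "0 < x" shows "pd_u \<tau> t x u = 0"
proof -
  have "\<sigma>\<^sup>2 * x\<^sup>2 * pd_u \<tau> t x u = 0"
    using residual_uxt_coeff[of \<sigma> k 0 lam \<tau> \<xi> \<phi> t x u 1 0] residual_zero[OF assms] tau_x[OF assms]
    by simp
  then show ?thesis using sigma_pos assms by simp
qed

lemma tau_eq: assumes "0 < x" shows "\<tau> t x u = \<tau> t 1 0"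
proof -
  have "((\<lambda>s. \<tau> t x s) has_real_derivative 0) (at s)" for s
    using has_real_derivative_pd_u[OF differentiable_pos_partials(1)[OF partials.self] assms, of t s]
      tau_u[OF assms, of t s] by simp
  then have "\<tau> t x u = \<tau> t x 0"
    using DERIV_isconst_all[of "\<lambda>s. \<tau> t x s" u 0] by blast
  also have "\<dots> = \<tau> t 1 0"
  proof (rule DERIV_zero_imp_const_pos[of "\<lambda>y. \<tau> t y 0"])
    show "((\<lambda>y. \<tau> t y 0) has_real_derivative 0) (at y)" if "0 < y" for y
      using has_real_derivative_pd_x[OF differentiable_pos_partials(1)[OF partials.self] that, of t 0]
        tau_x[OF that, of t 0] by simp
  qed (use assms in simp_all)
  finally show ?thesis .
qed

lemma tau_xx: "0 < x \<Longrightarrow> pd_x (pd_x \<tau>) t x u = 0"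
  by (rule pd_x_eqI[where g = "\<lambda>_. 0"]) (simp_all add: tau_x)

lemma tau_ux: "0 < x \<Longrightarrow> pd_u (pd_x \<tau>) t x u = 0"
  by (rule pd_u_eqI[where g = "\<lambda>_. 0"]) (simp_all add: tau_x)

lemma tau_uu: "0 < x \<Longrightarrow> pd_u (pd_u \<tau>) t x u = 0"
  by (rule pd_u_eqI[where g = "\<lambda>_. 0"]) (simp_all add: tau_u)

lemmas tau_derivs = tau_x tau_u tau_xx tau_ux tau_uu

lemma xi_u: assumes "0 < x" shows "pd_u \<xi> t x u = 0"
proof -
  have "\<sigma>\<^sup>2 * x\<^sup>2 * pd_u \<xi> t x u = 0"
    using residual_ux_uxx_coeff[where \<sigma> = \<sigma> and k = k and \<alpha> = 0 and lam = lam and t = t and u = u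
      and \<xi> = \<xi> and \<phi> = \<phi>, OF tau_derivs[OF assms]] residual_zero[OF assms]
    by simp
  then show ?thesis using sigma_pos assms by simp
qed

lemma xi_eq: assumes "0 < x" shows "\<xi> t x u = \<xi> t x 0"
proof -
  have "((\<lambda>s. \<xi> t x s) has_real_derivative 0) (at s)" for s
    using has_real_derivative_pd_u[OF differentiable_pos_partials(2)[OF partials.self] assms, of t s]
      xi_u[OF assms, of t s] by simp
  then show ?thesis
    using DERIV_isconst_all[of "\<lambda>s. \<xi> t x s" u 0] by blast
qed

lemma xi_uu: "0 < x \<Longrightarrow> pd_u (pd_u \<xi>) t x u = 0"
  by (rule pd_u_eqI[where g = "\<lambda>_. 0"]) (simp_all add: xi_u)

lemma xi_ux: assumes "0 < x" shows "pd_u (pd_x \<xi>) t x u = 0"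
proof -
  have "pd_x \<xi> t x s = pd_x \<xi> t x 0" for s
  proof (rule pd_x_eqI[where g = "\<lambda>y. \<xi> t y 0"])
    show "((\<lambda>y. \<xi> t y 0) has_real_derivative pd_x \<xi> t x 0) (at x)"
      by (rule has_real_derivative_pd_x[OF differentiable_pos_partials(2)[OF partials.self] assms])
  qed (auto intro: xi_eq assms)
  then show ?thesis
    by (intro pd_u_eqI[where g = "\<lambda>_. pd_x \<xi> t x 0"]) simp_all
qed

lemmas xi_derivs = xi_u xi_uu xi_ux

lemma phi_uu: assumes "0 < x" shows "pd_u (pd_u \<phi>) t x u = 0"
proof -
  have "\<sigma>\<^sup>2 * x\<^sup>2 * pd_u (pd_u \<phi>) t x u = 0"
    using residual_ux_sq_coeff[where \<sigma> = \<sigma> and k = k and \<alpha> = 0 and lam = lam and t = t and u = u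
      and \<xi> = \<xi> and \<phi> = \<phi>, OF tau_derivs[OF assms] xi_derivs[OF assms]] residual_zero[OF assms]
    by simp
  then show ?thesis using sigma_pos assms by simp
qed

lemma determining_uxx:
  assumes "0 < x"
  shows "\<sigma>\<^sup>2 * x * \<xi> t x u - \<sigma>\<^sup>2 * x\<^sup>2 * pd_x \<xi> t x u + pd_t \<tau> t x u * \<sigma>\<^sup>2 * x\<^sup>2 / 2 = 0"
  using residual_uxx_coeff[where \<sigma> = \<sigma> and k = k and \<alpha> = 0 and lam = lam and t = t and u = u
      and \<phi> = \<phi>, OF tau_derivs[OF assms] xi_derivs[OF assms]] residual_zero[OF assms]
  by simp

lemma determining_ux:
  assumes "0 < x"
  shows "\<xi> t x u * k * (0 - 2 * x) + (pd_t \<tau> t x u - pd_x \<xi> t x u) * k * x * (0 - x)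
    + \<sigma>\<^sup>2 * x\<^sup>2 / 2 * (2 * pd_u (pd_x \<phi>) t x u - pd_x (pd_x \<xi>) t x u) + pd_t \<xi> t x u = 0"
  using residual_ux_coeff[where \<sigma> = \<sigma> and k = k and \<alpha> = 0 and lam = lam and t = t and u = u
      and \<phi> = \<phi>, OF tau_derivs[OF assms] xi_derivs[OF assms]]
    residual_zero[OF assms, of t u 1 0 0] residual_zero[OF assms, of t u "-1" 0 0]
  by simp

lemma determining_zero_order:
  assumes "0 < x"
  shows "\<xi> t x u * 2 * lam * x * u + \<phi> t x u * lam * x\<^sup>2 + pd_x \<phi> t x u * k * x * (0 - x)
    + \<sigma>\<^sup>2 * x\<^sup>2 / 2 * pd_x (pd_x \<phi>) t x u - pd_t \<phi> t x u
    - (pd_u \<phi> t x u - pd_t \<tau> t x u) * lam * x\<^sup>2 * u = 0"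
  using residual_at_zero[where \<sigma> = \<sigma> and k = k and \<alpha> = 0 and lam = lam and t = t and u = u
      and \<xi> = \<xi> and \<phi> = \<phi>, OF tau_derivs[OF assms]] residual_zero[OF assms, of t u 0 0 0]
  by linarith

definition "tau' t = pd_t \<tau> t 1 0"
definition "tau'' t = pd_t (pd_t \<tau>) t 1 0"
definition "tau''' t = pd_t (pd_t (pd_t \<tau>)) t 1 0"
definition "beta t = \<xi> t 1 0"
definition "beta' t = pd_t \<xi> t 1 0"
definition "beta'' t = pd_t (pd_t \<xi>) t 1 0"

lemma has_real_derivative_tau:
  "((\<lambda>s. \<tau> s 1 0) has_real_derivative tau' t) (at t)"
  "(tau' has_real_derivative tau'' t) (at t)"
  "(tau'' has_real_derivative tau''' t) (at t)"
  unfolding tau'_def[abs_def] tau''_def[abs_def] tau'''_def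
  by (auto intro!: has_real_derivative_pd_t differentiable_pos_partials(1) partials.intros)

lemma has_real_derivative_beta:
  "(beta has_real_derivative beta' t) (at t)"
  "(beta' has_real_derivative beta'' t) (at t)"
  unfolding beta_def[abs_def] beta'_def[abs_def] beta''_def
  by (auto intro!: has_real_derivative_pd_t differentiable_pos_partials(2) partials.intros)

lemma tau_t: assumes "0 < x" shows "pd_t \<tau> t x u = tau' t"
  by (rule pd_t_eqI[where g = "\<lambda>s. \<tau> s 1 0"]) (simp_all add: tau_eq[OF assms] has_real_derivative_tau)

lemma xi_closed: assumes "0 < x" shows "\<xi> t x u = tau' t / 2 * x * ln x + beta t * x"
proof -
  define h where "h y = \<xi> t y 0 / y - tau' t / 2 * ln y" for y
  have "(h has_real_derivative 0) (at y)" if "0 < y" for y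
  proof -
    have "\<sigma>\<^sup>2 * y * (\<xi> t y 0 - pd_x \<xi> t y 0 * y + tau' t / 2 * y) = 0"
      using determining_uxx[OF that, of t 0] tau_t[OF that, of t 0]
      by (simp add: algebra_simps power2_eq_square)
    then have "pd_x \<xi> t y 0 * y - \<xi> t y 0 * 1 = tau' t / 2 * y"
      using sigma_pos that by simp
    moreover have "(h has_real_derivative
        (pd_x \<xi> t y 0 * y - \<xi> t y 0 * 1) / (y * y) - tau' t / 2 * (1 / y)) (at y)"
      unfolding h_def using that
      by (auto intro!: derivative_eq_intros
          has_real_derivative_pd_x[OF differentiable_pos_partials(2)[OF partials.self]])
    ultimately show ?thesis
      using that by (simp add: field_simps)
  qed
  then have "h x = h 1"
    using assms by (intro DERIV_zero_imp_const_pos) auto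
  then show ?thesis
    using xi_eq[OF assms, of t u] assms unfolding h_def beta_def by (simp add: field_simps)
qed

lemma xi_x: "0 < x \<Longrightarrow> pd_x \<xi> t x u = tau' t / 2 * (ln x + 1) + beta t"
  by (rule pd_x_eqI[where g = "\<lambda>y. tau' t / 2 * y * ln y + beta t * y"])
     (auto intro!: derivative_eq_intros simp: xi_closed field_simps)

lemma xi_xx: "0 < x \<Longrightarrow> pd_x (pd_x \<xi>) t x u = tau' t / (2 * x)"
  by (rule pd_x_eqI[where g = "\<lambda>y. tau' t / 2 * (ln y + 1) + beta t"])
     (auto intro!: derivative_eq_intros simp: xi_x field_simps)

lemma xi_t: "0 < x \<Longrightarrow> pd_t \<xi> t x u = tau'' t / 2 * x * ln x + beta' t * x"
  by (rule pd_t_eqI[where g = "\<lambda>s. tau' s / 2 * x * ln x + beta s * x"])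
     (auto intro!: derivative_eq_intros has_real_derivative_tau has_real_derivative_beta simp: xi_closed)

definition "rho t x = pd_u \<phi> t x 0"

lemma phi_u_eq_rho: assumes "0 < x" shows "pd_u \<phi> t x u = rho t x"
proof -
  have "((\<lambda>s. pd_u \<phi> t x s) has_real_derivative 0) (at s)" for s
    using has_real_derivative_pd_u[OF differentiable_pos_partials(3)[OF partials.du[OF partials.self]] assms,
        of t s] phi_uu[OF assms, of t s] by simp
  then show ?thesis
    using DERIV_isconst_all[of "\<lambda>s. pd_u \<phi> t x s" u 0] unfolding rho_def by blast
qed

lemma phi_affine: assumes "0 < x" shows "\<phi> t x u = \<phi> t x 0 + u * rho t x"
proof -
  have "((\<lambda>s. \<phi> t x s - s * rho t x) has_real_derivative 0) (at s)" for s
  proof -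
    have "((\<lambda>s. \<phi> t x s) has_real_derivative pd_u \<phi> t x s) (at s)"
      by (rule has_real_derivative_pd_u[OF differentiable_pos_partials(3)[OF partials.self] assms])
    then have "((\<lambda>s. \<phi> t x s - s * rho t x) has_real_derivative pd_u \<phi> t x s - rho t x) (at s)"
      by (auto intro!: derivative_eq_intros)
    then show ?thesis using phi_u_eq_rho[OF assms, of t s] by simp
  qed
  then show ?thesis
    using DERIV_isconst_all[of "\<lambda>s. \<phi> t x s - s * rho t x" u 0] by simp
qed

lemma phi_x_affine: assumes "0 < x" shows "pd_x \<phi> t x u = pd_x \<phi> t x 0 + u * pd_x (pd_u \<phi>) t x 0"
proof (rule pd_x_eqI[where g = "\<lambda>y. \<phi> t y 0 + u * pd_u \<phi> t y 0"])
  show "\<phi> t y u = \<phi> t y 0 + u * pd_u \<phi> t y 0" if "0 < y" for y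
    using phi_affine[OF that] unfolding rho_def .
  show "((\<lambda>y. \<phi> t y 0 + u * pd_u \<phi> t y 0) has_real_derivative
      pd_x \<phi> t x 0 + u * pd_x (pd_u \<phi>) t x 0) (at x)"
    using has_real_derivative_pd_x[OF differentiable_pos_partials(3)[OF partials.self] assms]
      has_real_derivative_pd_x[OF differentiable_pos_partials(3)[OF partials.du[OF partials.self]] assms]
    by (auto intro!: derivative_eq_intros)
qed (rule assms)

lemma phi_ux: assumes "0 < x" shows "pd_u (pd_x \<phi>) t x u = pd_x (pd_u \<phi>) t x 0"
proof (rule pd_u_eqI[where g = "\<lambda>s. pd_x \<phi> t x 0 + s * pd_x (pd_u \<phi>) t x 0"])
  show "pd_x \<phi> t x s = pd_x \<phi> t x 0 + s * pd_x (pd_u \<phi>) t x 0" for s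
    by (rule phi_x_affine[OF assms])
qed (auto intro!: derivative_eq_intros)

text \<open>\<open>F t x + gamma t\<close> is the coefficient of \<open>u\<close> in \<open>\<phi>\<close> (\<open>rho_eq\<close>): \<open>F\<close> integrates the
  \<open>u\<^sub>x\<close>-equation in \<open>x\<close>, and \<open>gamma\<close> is the constant of integration.\<close>

definition "F t x = tau' t / 4 * ln x + k * tau' t / (2 * \<sigma>\<^sup>2) * x * ln x + k * beta t * x / \<sigma>\<^sup>2
   - tau'' t / (4 * \<sigma>\<^sup>2) * (ln x)\<^sup>2 - beta' t / \<sigma>\<^sup>2 * ln x"
definition "F_x t x = tau' t / (4 * x) + k * tau' t / (2 * \<sigma>\<^sup>2) * (ln x + 1) + k * beta t / \<sigma>\<^sup>2
   - tau'' t / (2 * \<sigma>\<^sup>2) * ln x / x - beta' t / (\<sigma>\<^sup>2 * x)"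
definition "F_xx t x = - tau' t / (4 * x\<^sup>2) + k * tau' t / (2 * \<sigma>\<^sup>2 * x)
   - tau'' t / (2 * \<sigma>\<^sup>2) * (1 - ln x) / x\<^sup>2 + beta' t / (\<sigma>\<^sup>2 * x\<^sup>2)"
definition "F_t t x = tau'' t / 4 * ln x + k * tau'' t / (2 * \<sigma>\<^sup>2) * x * ln x + k * beta' t * x / \<sigma>\<^sup>2
   - tau''' t / (4 * \<sigma>\<^sup>2) * (ln x)\<^sup>2 - beta'' t / \<sigma>\<^sup>2 * ln x"

lemma has_real_derivative_F:
  "0 < x \<Longrightarrow> ((\<lambda>y. F t y) has_real_derivative F_x t x) (at x)"
  "0 < x \<Longrightarrow> ((\<lambda>y. F_x t y) has_real_derivative F_xx t x) (at x)"
  "((\<lambda>s. F s x) has_real_derivative F_t t x) (at t)"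
  unfolding F_def F_x_def F_xx_def F_t_def using sigma_pos
  by (auto intro!: derivative_eq_intros has_real_derivative_tau has_real_derivative_beta
      simp: field_simps power2_eq_square)

lemma rho_x: assumes "0 < x" shows "pd_x (pd_u \<phi>) t x 0 = F_x t x"
proof -
  let ?E = "pd_x (pd_u \<phi>) t x 0"
  have "(tau' t / 2 * x * ln x + beta t * x) * k * (0 - 2 * x)
       + (tau' t - (tau' t / 2 * (ln x + 1) + beta t)) * k * x * (0 - x)
       + \<sigma>\<^sup>2 * x\<^sup>2 / 2 * (2 * ?E - tau' t / (2 * x)) + (tau'' t / 2 * x * ln x + beta' t * x) = 0"
    using determining_ux[OF assms, of t 0] xi_closed[OF assms] xi_x[OF assms] xi_xx[OF assms]
      xi_t[OF assms] tau_t[OF assms] phi_ux[OF assms] by simp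
  moreover have "\<sigma>\<^sup>2 * x\<^sup>2 * (?E - F_x t x) = (tau' t / 2 * x * ln x + beta t * x) * k * (0 - 2 * x)
       + (tau' t - (tau' t / 2 * (ln x + 1) + beta t)) * k * x * (0 - x)
       + \<sigma>\<^sup>2 * x\<^sup>2 / 2 * (2 * ?E - tau' t / (2 * x)) + (tau'' t / 2 * x * ln x + beta' t * x)"
    unfolding F_x_def using sigma_pos assms by (simp add: field_simps power2_eq_square; algebra)
  ultimately show ?thesis
    using sigma_pos assms by simp
qed

definition "gamma t = rho t 1 - k * beta t / \<sigma>\<^sup>2"
definition "gamma' t = pd_t (pd_u \<phi>) t 1 0 - k * beta' t / \<sigma>\<^sup>2"

lemma has_real_derivative_gamma: "(gamma has_real_derivative gamma' t) (at t)"
proof -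
  have "((\<lambda>s. pd_u \<phi> s 1 0) has_real_derivative pd_t (pd_u \<phi>) t 1 0) (at t)"
    by (rule has_real_derivative_pd_t[OF differentiable_pos_partials(3)[OF partials.du[OF partials.self]]])
       simp
  then show ?thesis
    unfolding gamma_def[abs_def] gamma'_def rho_def using sigma_pos
    by (auto intro!: derivative_eq_intros has_real_derivative_beta simp: field_simps power2_eq_square)
qed

lemma rho_eq: assumes "0 < x" shows "rho t x = F t x + gamma t"
proof -
  define h where "h y = rho t y - F t y" for y
  have "(h has_real_derivative 0) (at y)" if "0 < y" for y
  proof -
    have "((\<lambda>y. pd_u \<phi> t y 0) has_real_derivative pd_x (pd_u \<phi>) t y 0) (at y)"
      by (rule has_real_derivative_pd_x[OF differentiable_pos_partials(3)[OF partials.du[OF partials.self]] that])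
    then have "(h has_real_derivative pd_x (pd_u \<phi>) t y 0 - F_x t y) (at y)"
      unfolding h_def rho_def by (auto intro!: derivative_eq_intros has_real_derivative_F that)
    then show ?thesis using rho_x[OF that] by simp
  qed
  then have "h x = h 1"
    using assms by (intro DERIV_zero_imp_const_pos) auto
  then show ?thesis
    unfolding h_def gamma_def F_def by simp
qed

lemma phi_closed: assumes "0 < x" shows "\<phi> t x u = \<phi> t x 0 + u * (F t x + gamma t)"
  unfolding rho_eq[OF assms, symmetric] by (rule phi_affine[OF assms])

lemma phi_u: assumes "0 < x" shows "pd_u \<phi> t x u = F t x + gamma t"
  unfolding rho_eq[OF assms, symmetric] by (rule phi_u_eq_rho[OF assms])

lemma phi_x: assumes "0 < x" shows "pd_x \<phi> t x u = pd_x \<phi> t x 0 + u * F_x t x"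
  unfolding rho_x[OF assms, symmetric] by (rule phi_x_affine[OF assms])

lemma phi_xx: assumes "0 < x" shows "pd_x (pd_x \<phi>) t x u = pd_x (pd_x \<phi>) t x 0 + u * F_xx t x"
proof (rule pd_x_eqI[where g = "\<lambda>y. pd_x \<phi> t y 0 + u * F_x t y"])
  show "((\<lambda>y. pd_x \<phi> t y 0 + u * F_x t y) has_real_derivative
      pd_x (pd_x \<phi>) t x 0 + u * F_xx t x) (at x)"
    using has_real_derivative_pd_x[OF differentiable_pos_partials(3)[OF partials.dx[OF partials.self]] assms]
    by (auto intro!: derivative_eq_intros has_real_derivative_F assms)
qed (auto intro: phi_x assms)

lemma phi_t: assumes "0 < x" shows "pd_t \<phi> t x u = pd_t \<phi> t x 0 + u * (F_t t x + gamma' t)"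
proof (rule pd_t_eqI[where g = "\<lambda>s. \<phi> s x 0 + u * (F s x + gamma s)"])
  show "((\<lambda>s. \<phi> s x 0 + u * (F s x + gamma s)) has_real_derivative
      pd_t \<phi> t x 0 + u * (F_t t x + gamma' t)) (at t)"
    using has_real_derivative_pd_t[OF differentiable_pos_partials(3)[OF partials.self] assms]
    by (auto intro!: derivative_eq_intros has_real_derivative_F has_real_derivative_gamma)
qed (rule phi_closed[OF assms])

text \<open>The zero-order equation at \<open>u = 1\<close> minus the one at \<open>u = 0\<close>.\<close>

lemma ln_polynomial:
  assumes "0 < x"
  shows "tau''' t / (4 * \<sigma>\<^sup>2) * (ln x)\<^sup>2 + beta'' t / \<sigma>\<^sup>2 * ln x
       + (beta' t / 2 - tau'' t / 4 - \<sigma>\<^sup>2 * tau' t / 8 - gamma' t) = 0"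
proof -
  have at_one: "(tau' t / 2 * x * ln x + beta t * x) * 2 * lam * x + (\<phi> t x 0 + (F t x + gamma t)) * lam * x\<^sup>2
     + (pd_x \<phi> t x 0 + F_x t x) * k * x * (0 - x)
     + \<sigma>\<^sup>2 * x\<^sup>2 / 2 * (pd_x (pd_x \<phi>) t x 0 + F_xx t x)
     - (pd_t \<phi> t x 0 + (F_t t x + gamma' t))
     - (F t x + gamma t - tau' t) * lam * x\<^sup>2 = 0"
    using determining_zero_order[OF assms, of t 1] phi_closed[OF assms, of t 1] phi_x[OF assms, of t 1]
      phi_xx[OF assms, of t 1] phi_t[OF assms, of t 1] phi_u[OF assms, of t 1]
      xi_closed[OF assms, of t 1] tau_t[OF assms, of t 1]
    by simp
  have at_zero: "\<phi> t x 0 * lam * x\<^sup>2 + pd_x \<phi> t x 0 * k * x * (0 - x)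
     + \<sigma>\<^sup>2 * x\<^sup>2 / 2 * pd_x (pd_x \<phi>) t x 0 - pd_t \<phi> t x 0 = 0"
    using determining_zero_order[OF assms, of t 0] by simp
  have "(tau' t / 2 * x * ln x + beta t * x) * 2 * lam * x + (F t x + gamma t) * lam * x\<^sup>2
     - F_x t x * k * x * x + \<sigma>\<^sup>2 * x\<^sup>2 / 2 * F_xx t x - (F_t t x + gamma' t)
     - (F t x + gamma t - tau' t) * lam * x\<^sup>2 = 0"
    using at_one at_zero by (simp add: algebra_simps add_divide_distrib)
  moreover have "(tau' t / 2 * x * ln x + beta t * x) * 2 * lam * x + (F t x + gamma t) * lam * x\<^sup>2
     - F_x t x * k * x * x + \<sigma>\<^sup>2 * x\<^sup>2 / 2 * F_xx t x - (F_t t x + gamma' t)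
     - (F t x + gamma t - tau' t) * lam * x\<^sup>2
     = tau''' t / (4 * \<sigma>\<^sup>2) * (ln x)\<^sup>2 + beta'' t / \<sigma>\<^sup>2 * ln x
       + (beta' t / 2 - tau'' t / 4 - \<sigma>\<^sup>2 * tau' t / 8 - gamma' t)"
    unfolding F_def F_x_def F_xx_def F_t_def lam_eq using sigma_pos assms
    by (simp add: field_simps power2_eq_square; algebra)
  ultimately show ?thesis by simp
qed

lemma tau'''_eq_0: "tau''' t = 0"
  and beta''_eq_0: "beta'' t = 0"
  and gamma'_eq: "gamma' t = beta' t / 2 - tau'' t / 4 - \<sigma>\<^sup>2 * tau' t / 8"
  using ln_quadratic_eq_zero[OF ln_polynomial, of t] sigma_pos by simp_all

lemma tau''_const: "tau'' t = tau'' 0"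
proof -
  have "tau'' t = tau'' 0 + 0 * t + 0 / 2 * t\<^sup>2"
    by (rule DERIV_affine_imp_quadratic[OF has_real_derivative_tau(3)]) (simp add: tau'''_eq_0)
  then show ?thesis by simp
qed

lemma tau'_affine: "tau' t = tau' 0 + tau'' 0 * t"
proof -
  have "tau' t = tau' 0 + tau'' 0 * t + 0 / 2 * t\<^sup>2"
    by (rule DERIV_affine_imp_quadratic[OF has_real_derivative_tau(2)])
       (metis tau''_const add_0_right mult_zero_left)
  then show ?thesis by simp
qed

lemma tau_quadratic: "\<tau> t 1 0 = \<tau> 0 1 0 + tau' 0 * t + tau'' 0 / 2 * t\<^sup>2"
  by (rule DERIV_affine_imp_quadratic[OF has_real_derivative_tau(1) tau'_affine])

lemma beta'_const: "beta' t = beta' 0"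
proof -
  have "beta' t = beta' 0 + 0 * t + 0 / 2 * t\<^sup>2"
    by (rule DERIV_affine_imp_quadratic[OF has_real_derivative_beta(2)]) (simp add: beta''_eq_0)
  then show ?thesis by simp
qed

lemma beta_affine: "beta t = beta 0 + beta' 0 * t"
proof -
  have "beta t = beta 0 + beta' 0 * t + 0 / 2 * t\<^sup>2"
    by (rule DERIV_affine_imp_quadratic[OF has_real_derivative_beta(1)])
       (metis beta'_const add_0_right mult_zero_left)
  then show ?thesis by simp
qed

lemma gamma_quadratic:
  "gamma t = gamma 0 + (beta' 0 / 2 - tau'' 0 / 4 - \<sigma>\<^sup>2 * tau' 0 / 8) * t - \<sigma>\<^sup>2 * tau'' 0 / 16 * t\<^sup>2"
proof -
  have "gamma' s = (beta' 0 / 2 - tau'' 0 / 4 - \<sigma>\<^sup>2 * tau' 0 / 8) + (- \<sigma>\<^sup>2 * tau'' 0 / 8) * s" for s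
  proof -
    have "gamma' s = beta' 0 / 2 - tau'' 0 / 4 - \<sigma>\<^sup>2 * (tau' 0 + tau'' 0 * s) / 8"
      by (simp only: gamma'_eq beta'_const[of s] tau''_const[of s] tau'_affine[of s])
    then show ?thesis by (simp add: field_simps)
  qed
  from DERIV_affine_imp_quadratic[OF has_real_derivative_gamma this, of t] show ?thesis
    by (simp add: field_simps)
qed

lemma solution_phi_u_zero: "is_solution \<sigma> k 0 lam (\<lambda>t x. \<phi> t x 0)"
  unfolding is_solution_def
proof (intro conjI allI impI)
  show "smooth_on dom_pos (\<lambda>t x u. \<phi> t x 0)"
    by (rule smooth_on_fix_u[OF smooth_phi])
  fix t x :: real assume "0 < x"
  have "pd_x \<phi> t x 0 = deriv (\<lambda>y. \<phi> t y 0) x"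
    and "pd_x (pd_x \<phi>) t x 0 = deriv (deriv (\<lambda>y. \<phi> t y 0)) x"
    and "pd_t \<phi> t x 0 = deriv (\<lambda>s. \<phi> s x 0) t"
    by (simp_all add: pd_x_def pd_t_def)
  then show "deriv (\<lambda>s. \<phi> s x 0) t =
      1/2 * \<sigma>\<^sup>2 * x\<^sup>2 * deriv (deriv (\<lambda>y. \<phi> t y 0)) x
      + k * x * (0 - x) * deriv (\<lambda>y. \<phi> t y 0) x + lam * x\<^sup>2 * \<phi> t x 0"
    using determining_zero_order[OF \<open>0 < x\<close>, of t 0] by (simp add: algebra_simps)
qed

lemma combination_of_generators:
  "is_combination_of_generators \<sigma> k (\<tau> 0 1 0) (tau' 0) (tau'' 0 / 2) (beta 0) (beta' 0) (gamma 0)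
     (\<lambda>t x. \<phi> t x 0) \<tau> \<xi> \<phi>"
  unfolding is_combination_of_generators_def span_tau_def span_xi_def span_phi_def
proof (intro allI impI conjI)
  fix t x u :: real assume x: "0 < x"
  show "\<tau> t x u = \<tau> 0 1 0 + tau' 0 * t + tau'' 0 / 2 * t\<^sup>2"
    using tau_eq[OF x] tau_quadratic[of t] by simp
  show "\<xi> t x u = tau' 0 * (1/2 * x * ln x) + tau'' 0 / 2 * (t * x * ln x) + beta 0 * x + beta' 0 * (t * x)"
    using xi_closed[OF x] tau'_affine[of t] beta_affine[of t] by (simp add: algebra_simps)
  have "\<phi> t x u = \<phi> t x 0 + u * (F t x + gamma t)" by (rule phi_closed[OF x])
  also have "\<dots> = tau' 0 * ((k / (2 * \<sigma>\<^sup>2) * x * ln x + 1/4 * ln x - \<sigma>\<^sup>2 / 8 * t) * u)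
      + tau'' 0 / 2 * ((k / \<sigma>\<^sup>2 * t * x * ln x - 1 / (2 * \<sigma>\<^sup>2) * (ln x)\<^sup>2 + 1/2 * t * ln x
               - \<sigma>\<^sup>2 / 8 * t\<^sup>2 - 1/2 * t) * u)
      + beta 0 * (k / \<sigma>\<^sup>2 * x * u)
      + beta' 0 * ((k / \<sigma>\<^sup>2 * t * x - 1 / \<sigma>\<^sup>2 * ln x + 1/2 * t) * u)
      + gamma 0 * u
      + \<phi> t x 0"
    unfolding F_def tau'_affine[of t] tau''_const[of t] beta_affine[of t] beta'_const[of t]
      gamma_quadratic[of t] using sigma_pos
    by (simp add: field_simps power2_eq_square; algebra)
  finally show "\<phi> t x u = tau' 0 * ((k / (2 * \<sigma>\<^sup>2) * x * ln x + 1/4 * ln x - \<sigma>\<^sup>2 / 8 * t) * u)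
      + tau'' 0 / 2 * ((k / \<sigma>\<^sup>2 * t * x * ln x - 1 / (2 * \<sigma>\<^sup>2) * (ln x)\<^sup>2 + 1/2 * t * ln x
               - \<sigma>\<^sup>2 / 8 * t\<^sup>2 - 1/2 * t) * u)
      + beta 0 * (k / \<sigma>\<^sup>2 * x * u)
      + beta' 0 * ((k / \<sigma>\<^sup>2 * t * x - 1 / \<sigma>\<^sup>2 * ln x + 1/2 * t) * u)
      + gamma 0 * u
      + (\<lambda>t x. \<phi> t x 0) t x" by simp
qed

end

section \<open>The listed vector fields are symmetries\<close>

locale generator_combination =
  fixes \<sigma> k lam c1 c2 c3 c4 c5 c6 :: real and w :: "real \<Rightarrow> real \<Rightarrow> real"
    and \<tau> \<xi> \<phi> :: "real \<Rightarrow> real \<Rightarrow> real \<Rightarrow> real"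
  assumes sigma_pos: "0 < \<sigma>" and lam_eq: "lam = k\<^sup>2 / (2 * \<sigma>\<^sup>2)"
    and solution_w: "is_solution \<sigma> k 0 lam w"
    and combination: "is_combination_of_generators \<sigma> k c1 c2 c3 c4 c5 c6 w \<tau> \<xi> \<phi>"
begin

lemma tau_eq: "0 < x \<Longrightarrow> \<tau> t x u = span_tau c1 c2 c3 t x u"
  and xi_eq: "0 < x \<Longrightarrow> \<xi> t x u = span_xi c2 c3 c4 c5 t x u"
  and phi_eq: "0 < x \<Longrightarrow> \<phi> t x u = span_phi \<sigma> k c2 c3 c4 c5 c6 w t x u"
  using combination by (simp_all add: is_combination_of_generators_def)

lemma smooth_w: "smooth_on dom_pos (\<lambda>t x u. w t x)"
  using solution_w by (simp add: is_solution_def)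

lemma elementary_w: "(\<lambda>t x u. w t x) \<in> elementary (\<lambda>t x u. w t x)"
  by (rule elementary.partial[OF partials.self])

lemma smooth_tau: "smooth_on dom_pos \<tau>"
proof (rule smooth_on_if_eq_on_pos_elementary[OF smooth_w])
  show "span_tau c1 c2 c3 \<in> elementary (\<lambda>t x u. w t x)"
    unfolding span_tau_def[abs_def] by (intro elementary_intros)
  show "eq_on_pos \<tau> (span_tau c1 c2 c3)"
    using tau_eq by (simp add: eq_on_pos_def)
qed

lemma smooth_xi: "smooth_on dom_pos \<xi>"
proof (rule smooth_on_if_eq_on_pos_elementary[OF smooth_w])
  show "span_xi c2 c3 c4 c5 \<in> elementary (\<lambda>t x u. w t x)"
    unfolding span_xi_def[abs_def] by (intro elementary_intros)
  show "eq_on_pos \<xi> (span_xi c2 c3 c4 c5)"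
    using xi_eq by (simp add: eq_on_pos_def)
qed

lemma smooth_phi: "smooth_on dom_pos \<phi>"
proof (rule smooth_on_if_eq_on_pos_elementary[OF smooth_w])
  show "span_phi \<sigma> k c2 c3 c4 c5 c6 w \<in> elementary (\<lambda>t x u. w t x)"
    unfolding span_phi_def[abs_def] by (intro elementary_intros elementary_w)
  show "eq_on_pos \<phi> (span_phi \<sigma> k c2 c3 c4 c5 c6 w)"
    using phi_eq by (simp add: eq_on_pos_def)
qed

lemma has_real_derivative_w:
  assumes "0 < x"
  shows "((\<lambda>s. w s x) has_real_derivative deriv (\<lambda>s. w s x) t) (at t)"
    and "((\<lambda>y. w t y) has_real_derivative deriv (\<lambda>y. w t y) x) (at x)"
    and "(deriv (\<lambda>y. w t y) has_real_derivative deriv (deriv (\<lambda>y. w t y)) x) (at x)"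
  using has_real_derivative_pd_t[OF smooth_on_partial_differentiable_pos[OF smooth_w partials.self] assms]
    has_real_derivative_pd_x[OF smooth_on_partial_differentiable_pos[OF smooth_w partials.self] assms]
    has_real_derivative_pd_x[OF smooth_on_partial_differentiable_pos[OF smooth_w
      partials.dx[OF partials.self]] assms]
  by (simp_all add: pd_t_def pd_x_def)

definition "p t x = c2 * (k / (2 * \<sigma>\<^sup>2) * x * ln x + 1/4 * ln x - \<sigma>\<^sup>2 / 8 * t)
          + c3 * (k / \<sigma>\<^sup>2 * t * x * ln x - 1 / (2 * \<sigma>\<^sup>2) * (ln x)\<^sup>2 + 1/2 * t * ln x
                   - \<sigma>\<^sup>2 / 8 * t\<^sup>2 - 1/2 * t)
          + c4 * (k / \<sigma>\<^sup>2 * x) + c5 * (k / \<sigma>\<^sup>2 * t * x - 1 / \<sigma>\<^sup>2 * ln x + 1/2 * t) + c6"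
definition "p_t t x = c2 * (- \<sigma>\<^sup>2 / 8) + c3 * (k / \<sigma>\<^sup>2 * x * ln x + 1/2 * ln x - \<sigma>\<^sup>2 / 4 * t - 1/2)
          + c5 * (k / \<sigma>\<^sup>2 * x + 1/2)"
definition "p_x t x = c2 * (k / (2 * \<sigma>\<^sup>2) * (ln x + 1) + 1 / (4 * x))
          + c3 * (k / \<sigma>\<^sup>2 * t * (ln x + 1) - ln x / (\<sigma>\<^sup>2 * x) + t / (2 * x)) + c4 * k / \<sigma>\<^sup>2
          + c5 * (k / \<sigma>\<^sup>2 * t - 1 / (\<sigma>\<^sup>2 * x))"
definition "p_xx t x = c2 * (k / (2 * \<sigma>\<^sup>2 * x) - 1 / (4 * x\<^sup>2))
          + c3 * (k * t / (\<sigma>\<^sup>2 * x) - (1 - ln x) / (\<sigma>\<^sup>2 * x\<^sup>2) - t / (2 * x\<^sup>2)) + c5 / (\<sigma>\<^sup>2 * x\<^sup>2)"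

lemma phi_eq_affine: assumes "0 < x" shows "\<phi> t x u = p t x * u + w t x"
  unfolding phi_eq[OF assms] span_phi_def p_def by (simp add: algebra_simps)

lemma has_real_derivative_p:
  "((\<lambda>s. p s x) has_real_derivative p_t t x) (at t)"
  "0 < x \<Longrightarrow> ((\<lambda>y. p t y) has_real_derivative p_x t x) (at x)"
  "0 < x \<Longrightarrow> ((\<lambda>y. p_x t y) has_real_derivative p_xx t x) (at x)"
  unfolding p_def p_t_def p_x_def p_xx_def using sigma_pos
  by (auto intro!: derivative_eq_intros simp: field_simps power2_eq_square)

context
  fixes t x u :: real
  assumes x: "0 < x"
begin

lemma tau_t: "pd_t \<tau> t x u = c2 + 2 * c3 * t"
  by (rule pd_t_eqI[where g = "\<lambda>s. c1 + c2 * s + c3 * s\<^sup>2"])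
     (auto intro!: derivative_eq_intros simp: tau_eq[OF x] span_tau_def)

lemma tau_x: "pd_x \<tau> t y s = 0" if "0 < y" for y s
  by (rule pd_x_eqI[where g = "\<lambda>_. c1 + c2 * t + c3 * t\<^sup>2"]) (simp_all add: tau_eq span_tau_def that)

lemma tau_u: "pd_u \<tau> t x s = 0" for s
  by (rule pd_u_eqI[where g = "\<lambda>_. c1 + c2 * t + c3 * t\<^sup>2"]) (simp_all add: tau_eq[OF x] span_tau_def)

lemma tau_xx: "pd_x (pd_x \<tau>) t x u = 0"
  by (rule pd_x_eqI[where g = "\<lambda>_. 0"]) (simp_all add: tau_x x)

lemma tau_ux: "pd_u (pd_x \<tau>) t x u = 0"
  by (rule pd_u_eqI[where g = "\<lambda>_. 0"]) (simp_all add: tau_x x)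

lemma tau_uu: "pd_u (pd_u \<tau>) t x u = 0"
  by (rule pd_u_eqI[where g = "\<lambda>_. 0"]) (simp_all add: tau_u)

lemma xi_t: "pd_t \<xi> t x u = c3 * (x * ln x) + c5 * x"
  by (rule pd_t_eqI[where g = "\<lambda>s. c2 * (1/2 * x * ln x) + c3 * (s * x * ln x) + c4 * x + c5 * (s * x)"])
     (auto intro!: derivative_eq_intros simp: xi_eq[OF x] span_xi_def)

lemma xi_x: "pd_x \<xi> t y s = c2 / 2 * (ln y + 1) + c3 * t * (ln y + 1) + c4 + c5 * t" if "0 < y" for y s
  by (rule pd_x_eqI[where g = "\<lambda>z. c2 * (1/2 * z * ln z) + c3 * (t * z * ln z) + c4 * z + c5 * (t * z)"])
     (use that in \<open>auto intro!: derivative_eq_intros simp: xi_eq span_xi_def field_simps\<close>)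

lemma xi_xx: "pd_x (pd_x \<xi>) t x u = c2 / (2 * x) + c3 * t / x"
  by (rule pd_x_eqI[where g = "\<lambda>z. c2 / 2 * (ln z + 1) + c3 * t * (ln z + 1) + c4 + c5 * t"])
     (use x in \<open>auto intro!: derivative_eq_intros simp: xi_x field_simps\<close>)

lemma xi_u: "pd_u \<xi> t x s = 0" for s
  by (rule pd_u_eqI[where g = "\<lambda>_. span_xi c2 c3 c4 c5 t x 0"]) (simp_all add: xi_eq[OF x] span_xi_def)

lemma xi_uu: "pd_u (pd_u \<xi>) t x u = 0"
  by (rule pd_u_eqI[where g = "\<lambda>_. 0"]) (simp_all add: xi_u)

lemma xi_ux: "pd_u (pd_x \<xi>) t x u = 0"
  by (rule pd_u_eqI[where g = "\<lambda>_. c2 / 2 * (ln x + 1) + c3 * t * (ln x + 1) + c4 + c5 * t"])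
     (simp_all add: xi_x x)

lemma phi_t: "pd_t \<phi> t x u = p_t t x * u + deriv (\<lambda>s. w s x) t"
  by (rule pd_t_eqI[where g = "\<lambda>s. p s x * u + w s x"])
     (auto intro!: derivative_eq_intros has_real_derivative_p has_real_derivative_w x
       simp: phi_eq_affine[OF x])

lemma phi_x: "pd_x \<phi> t y s = p_x t y * s + deriv (\<lambda>z. w t z) y" if "0 < y" for y s
  by (rule pd_x_eqI[where g = "\<lambda>z. p t z * s + w t z"])
     (use that in \<open>auto intro!: derivative_eq_intros has_real_derivative_p has_real_derivative_w
       simp: phi_eq_affine\<close>)

lemma phi_xx: "pd_x (pd_x \<phi>) t x u = p_xx t x * u + deriv (deriv (\<lambda>z. w t z)) x"
  by (rule pd_x_eqI[where g = "\<lambda>y. p_x t y * u + deriv (\<lambda>z. w t z) y"])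
     (use x in \<open>auto intro!: derivative_eq_intros has_real_derivative_p has_real_derivative_w
       simp: phi_x\<close>)

lemma phi_u: "pd_u \<phi> t x s = p t x" for s
  by (rule pd_u_eqI[where g = "\<lambda>z. p t x * z + w t x"])
     (auto intro!: derivative_eq_intros simp: phi_eq_affine[OF x])

lemma phi_uu: "pd_u (pd_u \<phi>) t x u = 0"
  by (rule pd_u_eqI[where g = "\<lambda>_. p t x"]) (simp_all add: phi_u)

lemma phi_ux: "pd_u (pd_x \<phi>) t x u = p_x t x"
  by (rule pd_u_eqI[where g = "\<lambda>s. p_x t x * s + deriv (\<lambda>z. w t z) x"])
     (auto intro!: derivative_eq_intros simp: phi_x x)

lemma residual_eq_0: "symmetry_residual \<sigma> k 0 lam \<tau> \<xi> \<phi> t x u ux uxx uxt = 0"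
proof -
  have pde: "deriv (\<lambda>s. w s x) t = 1/2 * \<sigma>\<^sup>2 * x\<^sup>2 * deriv (deriv (\<lambda>y. w t y)) x
      + k * x * (0 - x) * deriv (\<lambda>y. w t y) x + lam * x\<^sup>2 * w t x"
    using solution_w x unfolding is_solution_def by blast
  show ?thesis
    unfolding symmetry_residual_def Let_def prol_t_def prol_x_def prol_xx_def
      tau_t tau_x[OF x] tau_u tau_xx tau_ux tau_uu xi_t xi_x[OF x] xi_xx xi_u xi_uu xi_ux
      phi_t phi_x[OF x] phi_xx phi_u phi_uu phi_ux xi_eq[OF x] phi_eq_affine[OF x] pde
    unfolding span_xi_def p_def p_t_def p_x_def p_xx_def lam_eq using sigma_pos x
    by (simp add: field_simps power2_eq_square; algebra)
qed

end

lemma is_symmetry: "is_symmetry \<sigma> k 0 lam \<tau> \<xi> \<phi>"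
  unfolding is_symmetry_iff_residual using smooth_tau smooth_xi smooth_phi residual_eq_0 by blast

end

lemma is_symmetry_iff_combination_of_generators:
  assumes "0 < \<sigma>" and "lam = k\<^sup>2 / (2 * \<sigma>\<^sup>2)"
  shows "is_symmetry \<sigma> k 0 lam \<tau> \<xi> \<phi> \<longleftrightarrow> (\<exists>c1 c2 c3 c4 c5 c6 w.
      is_solution \<sigma> k 0 lam w \<and> is_combination_of_generators \<sigma> k c1 c2 c3 c4 c5 c6 w \<tau> \<xi> \<phi>)"
    (is "_ \<longleftrightarrow> ?span")
proof
  assume "is_symmetry \<sigma> k 0 lam \<tau> \<xi> \<phi>"
  then interpret pde_symmetry \<sigma> k lam \<tau> \<xi> \<phi>
    using assms by unfold_locales (auto simp: is_symmetry_iff_residual)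
  show ?span
    using solution_phi_u_zero combination_of_generators by blast
next
  assume ?span
  then obtain c1 c2 c3 c4 c5 c6 w where "is_solution \<sigma> k 0 lam w"
    and "is_combination_of_generators \<sigma> k c1 c2 c3 c4 c5 c6 w \<tau> \<xi> \<phi>" by blast
  then interpret generator_combination \<sigma> k lam c1 c2 c3 c4 c5 c6 w \<tau> \<xi> \<phi>
    using assms by unfold_locales auto
  show "is_symmetry \<sigma> k 0 lam \<tau> \<xi> \<phi>" by (rule is_symmetry)
qed

theorem proposition2p1:
  fixes \<sigma> k \<alpha> lam :: real
    and \<tau> \<xi> \<phi> :: "real \<Rightarrow> real \<Rightarrow> real \<Rightarrow> real"
  assumes "\<sigma> > 0" and "k > 0" and "\<alpha> = 0" and "lam = k\<^sup>2 / (2 * \<sigma>\<^sup>2)"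
  shows "is_symmetry \<sigma> k \<alpha> lam \<tau> \<xi> \<phi> \<longleftrightarrow>
    (\<exists>c1 c2 c3 c4 c5 c6 :: real. \<exists>w. is_solution \<sigma> k \<alpha> lam w \<and>
      (\<forall>t x u. x > 0 \<longrightarrow>
        \<tau> t x u = c1 + c2 * t + c3 * t\<^sup>2 \<and>
        \<xi> t x u = c2 * (1/2 * x * ln x) + c3 * (t * x * ln x) + c4 * x + c5 * (t * x) \<and>
        \<phi> t x u =
            c2 * ((k / (2 * \<sigma>\<^sup>2) * x * ln x + 1/4 * ln x - \<sigma>\<^sup>2 / 8 * t) * u)
          + c3 * ((k / \<sigma>\<^sup>2 * t * x * ln x - 1 / (2 * \<sigma>\<^sup>2) * (ln x)\<^sup>2 + 1/2 * t * ln x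
                   - \<sigma>\<^sup>2 / 8 * t\<^sup>2 - 1/2 * t) * u)
          + c4 * (k / \<sigma>\<^sup>2 * x * u)
          + c5 * ((k / \<sigma>\<^sup>2 * t * x - 1 / \<sigma>\<^sup>2 * ln x + 1/2 * t) * u)
          + c6 * u
          + w t x))"
  using is_symmetry_iff_combination_of_generators[OF assms(1,4), of \<tau> \<xi> \<phi>]
  unfolding assms(3) is_combination_of_generators_def span_tau_def span_xi_def span_phi_def .

end
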